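(* Let $a_{ij}\ge 0$ for $1\le i\ne j\le N$ with $a_{ij}=a_{ji}$, and let $\mathbf S(t)$ be the stochastic consensus model: independent Poisson processes $N^{ij}$ of rate $a_{ij}$, and $\mathrm dS_i=\sum_{j\ne i}(S_j-S_i)\,\mathrm dN^{ij}$. Let $V(\mathbf S)=\frac1N\sum_{i=1}^N|S_i-\bar S|^2=\frac{1}{2N^2}\sum_{i,j}|S_i-S_j|^2$ with $\bar S=\frac1N\sum_i S_i$. Then $$\frac{d}{dt}\mathbb E[V(\mathbf S(t))]=-\frac{1}{N^2}\mathbb E\Big[\sum_{i,j}a_{ij}|S_j(t)-S_i(t)|^2\Big].$$
   Context: Equivalently, the process has generator $\frac{d}{dt}\mathbb E[\varphi(\mathbf S)]=\sum_{i\ne j}a_{ij}\mathbb E[\varphi(\Phi_{ij}(\mathbf S))-\varphi(\mathbf S)]$, where $\Phi_{ij}$ replaces the $i$th coordinate by the $j$th. *)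

theory Defs
  imports "HOL-Probability.Probability"
begin

text \<open>States of the consensus model: N = CARD('n) agents, each with an opinion in a
Euclidean space 'a; a state is S :: 'a^'n with components S$i.\<close>

definition mean_state :: "'a::euclidean_space ^ 'n::finite \<Rightarrow> 'a" where
  "mean_state S = (1 / real CARD('n)) *\<^sub>R (\<Sum>i\<in>UNIV. S $ i)"

definition variance_state :: "'a::euclidean_space ^ 'n::finite \<Rightarrow> real" where
  "variance_state S = (1 / real CARD('n)) * (\<Sum>i\<in>UNIV. (norm (S $ i - mean_state S))\<^sup>2)"

definition jump_map :: "'n::finite \<Rightarrow> 'n \<Rightarrow> 'a ^ 'n \<Rightarrow> 'a ^ 'n" where
  "jump_map i j S = (\<chi> k. if k = i then S $ j else S $ k)"

text \<open>mu t is the law of S(t). The stochastic consensus model (Poisson clocks of rate a_ij,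
dS_i = sum_j (S_j - S_i) dN^ij) is characterised by its generator (Kolmogorov forward equation):
d/dt E[phi(S)] = sum_{i<>j} a_ij E[phi(Phi_ij S) - phi(S)], for every observable phi whose
expectations are finite along the evolution.\<close>
definition consensus_law ::
  "('n::finite \<Rightarrow> 'n \<Rightarrow> real) \<Rightarrow> (real \<Rightarrow> ('a::euclidean_space ^ 'n) measure) \<Rightarrow> bool" where
  "consensus_law a \<mu> \<longleftrightarrow>
     (\<forall>t\<ge>0. prob_space (\<mu> t) \<and> sets (\<mu> t) = sets borel) \<and>
     (\<forall>\<phi> :: 'a ^ 'n \<Rightarrow> real.
        (\<forall>t\<ge>0. integrable (\<mu> t) \<phi> \<and> (\<forall>i j. integrable (\<mu> t) (\<lambda>S. \<phi> (jump_map i j S)))) \<longrightarrow>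
        (\<forall>t\<ge>0. ((\<lambda>s. \<integral>S. \<phi> S \<partial>\<mu> s) has_real_derivative
           (\<Sum>i\<in>UNIV. \<Sum>j\<in>UNIV - {i}. a i j * (\<integral>S. \<phi> (jump_map i j S) - \<phi> S \<partial>\<mu> t)))
           (at t within {0..})))"

end

theory Submission
  imports Defs
begin

text \<open>The jump \<open>\<Phi>\<^sub>i\<^sub>j\<close> moves the mean by \<open>(S\<^sub>j - S\<^sub>i)/N\<close> and the second moment by
  \<open>(|S\<^sub>j|\<^sup>2 - |S\<^sub>i|\<^sup>2)/N\<close>, so the change of the variance is a part antisymmetric in \<open>(i, j)\<close>,
  minus \<open>|S\<^sub>j - S\<^sub>i|\<^sup>2/N\<^sup>2\<close>. Summed against the symmetric rates \<open>a\<^sub>i\<^sub>j\<close> the antisymmetric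
  part cancels, and the generator equation applied to \<open>\<phi> = V\<close> gives the identity. The
  generator equation may be used for \<open>V\<close> because \<open>V \<circ> \<Phi>\<^sub>i\<^sub>j \<le> 2 V\<close>.\<close>

lemma sum_jump_map:
  fixes f :: "'a \<Rightarrow> 'b::ab_group_add" and S :: "'a ^ 'n::finite"
  shows "(\<Sum>k\<in>UNIV. f (jump_map i j S $ k)) = (\<Sum>k\<in>UNIV. f (S $ k)) - f (S $ i) + f (S $ j)"
proof -
  have "(\<Sum>k\<in>UNIV. f (jump_map i j S $ k)) = f (S $ j) + (\<Sum>k\<in>UNIV - {i}. f (jump_map i j S $ k))"
    by (subst sum.remove[of UNIV i]) (auto simp: jump_map_def)
  also have "(\<Sum>k\<in>UNIV - {i}. f (jump_map i j S $ k)) = (\<Sum>k\<in>UNIV - {i}. f (S $ k))"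
    by (rule sum.cong) (auto simp: jump_map_def)
  also have "\<dots> = (\<Sum>k\<in>UNIV. f (S $ k)) - f (S $ i)"
    by (subst sum.remove[of UNIV i]) auto
  finally show ?thesis by (simp add: algebra_simps)
qed

lemma continuous_on_jump_map: "continuous_on UNIV (jump_map i j :: 'a::topological_space ^ 'n::finite \<Rightarrow> _)"
  unfolding jump_map_def
proof (rule continuous_on_vec_lambda)
  show "continuous_on UNIV (\<lambda>S. if k = i then S $ j else S $ k)" for k
    by (cases "k = i") (auto intro!: continuous_intros)
qed

lemma mean_state_jump_map:
  fixes S :: "'a::euclidean_space ^ 'n::finite"
  shows "mean_state (jump_map i j S) = mean_state S + (1 / real CARD('n)) *\<^sub>R (S $ j - S $ i)"
  unfolding mean_state_def by (subst sum_jump_map[of "\<lambda>x. x"]) (simp add: algebra_simps)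

lemma variance_state_nonneg: "variance_state S \<ge> 0"
  unfolding variance_state_def by (simp add: sum_nonneg)

lemma continuous_on_variance_state: "continuous_on UNIV variance_state"
  unfolding variance_state_def mean_state_def by (auto intro!: continuous_intros)

lemma mean_sq_dist_eq_variance_state:
  fixes S :: "'a::euclidean_space ^ 'n::finite"
  shows "(1 / real CARD('n)) * (\<Sum>k\<in>UNIV. (norm (S $ k - c))\<^sup>2)
           = variance_state S + (norm (mean_state S - c))\<^sup>2"
proof -
  let ?N = "real CARD('n)" and ?m = "mean_state S"
  have cross_zero: "(\<Sum>k\<in>UNIV. inner (S $ k - ?m) (?m - c)) = 0"
  proof -
    have "(\<Sum>k\<in>UNIV. S $ k - ?m) = 0"
      by (simp add: sum_subtractf sum_constant_scaleR mean_state_def)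
    then show ?thesis by (simp flip: inner_sum_left)
  qed
  have "(norm (S $ k - c))\<^sup>2 = (norm (S $ k - ?m))\<^sup>2 + 2 * inner (S $ k - ?m) (?m - c) + (norm (?m - c))\<^sup>2"
    for k using dot_norm[of "S $ k - ?m" "?m - c"] by simp
  then have "(\<Sum>k\<in>UNIV. (norm (S $ k - c))\<^sup>2)
      = (\<Sum>k\<in>UNIV. (norm (S $ k - ?m))\<^sup>2) + ?N * (norm (?m - c))\<^sup>2"
    by (simp add: sum.distrib cross_zero flip: sum_distrib_left)
  then show ?thesis
    by (simp add: variance_state_def distrib_left)
qed

lemma variance_state_eq_second_moment:
  fixes S :: "'a::euclidean_space ^ 'n::finite"
  shows "variance_state S = (1 / real CARD('n)) * (\<Sum>k\<in>UNIV. (norm (S $ k))\<^sup>2) - (norm (mean_state S))\<^sup>2"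
  using mean_sq_dist_eq_variance_state[of S 0] by simp

lemma variance_state_jump_map_diff:
  fixes S :: "'a::euclidean_space ^ 'n::finite"
  defines "N \<equiv> real CARD('n)"
  shows "variance_state (jump_map i j S) - variance_state S =
     (1 / N) * ((norm (S $ j))\<^sup>2 - (norm (S $ i))\<^sup>2) - (2 / N) * inner (mean_state S) (S $ j - S $ i)
     - (1 / N\<^sup>2) * (norm (S $ j - S $ i))\<^sup>2"
proof -
  have "(norm (mean_state S + (1 / N) *\<^sub>R (S $ j - S $ i)))\<^sup>2 = (norm (mean_state S))\<^sup>2
      + (2 / N) * inner (mean_state S) (S $ j - S $ i) + (1 / N\<^sup>2) * (norm (S $ j - S $ i))\<^sup>2"
    unfolding power2_norm_eq_inner
    by (simp add: inner_simps inner_commute algebra_simps power2_eq_square)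
  then show ?thesis
    unfolding variance_state_eq_second_moment mean_state_jump_map sum_jump_map[of "\<lambda>x. (norm x)\<^sup>2"]
    by (simp add: N_def algebra_simps)
qed

lemma variance_state_jump_map_le:
  fixes S :: "'a::euclidean_space ^ 'n::finite"
  shows "variance_state (jump_map i j S) \<le> 2 * variance_state S"
proof -
  let ?N = "real CARD('n)" and ?m = "mean_state S"
  let ?dev = "\<lambda>x. (norm (x - ?m))\<^sup>2"
  have "variance_state (jump_map i j S) \<le> (1 / ?N) * (\<Sum>k\<in>UNIV. ?dev (jump_map i j S $ k))"
    using mean_sq_dist_eq_variance_state[of "jump_map i j S" ?m] by simp
  also have "(\<Sum>k\<in>UNIV. ?dev (jump_map i j S $ k)) \<le> 2 * (\<Sum>k\<in>UNIV. ?dev (S $ k))"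
  proof -
    have "?dev (S $ j) \<le> (\<Sum>k\<in>UNIV. ?dev (S $ k))"
      by (rule member_le_sum) auto
    then show ?thesis
      using sum_jump_map[of ?dev i j S] zero_le_power2[of "norm (S $ i - ?m)"] by linarith
  qed
  finally show ?thesis
    by (simp add: variance_state_def divide_right_mono)
qed

lemma sum_off_diagonal_antisym_eq_0:
  fixes a f :: "'n::finite \<Rightarrow> 'n \<Rightarrow> real"
  assumes symm: "\<And>i j. i \<noteq> j \<Longrightarrow> a i j = a j i"
    and antisym: "\<And>i j. f i j = - f j i"
  shows "(\<Sum>i\<in>UNIV. \<Sum>j\<in>UNIV - {i}. a i j * f i j) = 0"
proof -
  let ?g = "\<lambda>i j. if j = i then 0 else a i j * f i j"
  have "(\<Sum>j\<in>UNIV - {i}. a i j * f i j) = (\<Sum>j\<in>UNIV. ?g i j)" for i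
    by (subst sum.remove[of UNIV i]) (auto intro!: sum.cong)
  then have off_diag: "(\<Sum>i\<in>UNIV. \<Sum>j\<in>UNIV - {i}. a i j * f i j) = (\<Sum>i\<in>UNIV. \<Sum>j\<in>UNIV. ?g i j)"
    by simp
  have "(\<Sum>i\<in>UNIV. \<Sum>j\<in>UNIV. ?g i j) = (\<Sum>j\<in>UNIV. \<Sum>i\<in>UNIV. ?g i j)"
    by (rule sum.swap)
  also have "\<dots> = (\<Sum>j\<in>UNIV. \<Sum>i\<in>UNIV. - ?g j i)"
  proof (intro sum.cong refl)
    show "?g i j = - ?g j i" for i j
      using symm[of i j] antisym[of i j] by (cases "i = j") auto
  qed
  also have "\<dots> = - (\<Sum>j\<in>UNIV. \<Sum>i\<in>UNIV. ?g j i)"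
    by (simp add: sum_negf)
  finally show ?thesis
    using off_diag by simp
qed

lemma generator_variance_state:
  fixes a :: "'n::finite \<Rightarrow> 'n \<Rightarrow> real" and S :: "'a::euclidean_space ^ 'n"
  assumes symm: "\<And>i j. i \<noteq> j \<Longrightarrow> a i j = a j i"
  shows "(\<Sum>i\<in>UNIV. \<Sum>j\<in>UNIV - {i}. a i j * (variance_state (jump_map i j S) - variance_state S))
    = - (1 / (real CARD('n))\<^sup>2) * (\<Sum>i\<in>UNIV. \<Sum>j\<in>UNIV - {i}. a i j * (norm (S $ j - S $ i))\<^sup>2)"
proof -
  let ?N = "real CARD('n)"
  define f where "f i j = (1 / ?N) * ((norm (S $ j))\<^sup>2 - (norm (S $ i))\<^sup>2)
      - (2 / ?N) * inner (mean_state S) (S $ j - S $ i)" for i j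
  have "f i j = - f j i" for i j
    unfolding f_def by (simp add: algebra_simps inner_diff_right)
  then have cancel: "(\<Sum>i\<in>UNIV. \<Sum>j\<in>UNIV - {i}. a i j * f i j) = 0"
    using sum_off_diagonal_antisym_eq_0 symm by blast
  have "(\<Sum>i\<in>UNIV. \<Sum>j\<in>UNIV - {i}. a i j * (variance_state (jump_map i j S) - variance_state S))
     = (\<Sum>i\<in>UNIV. \<Sum>j\<in>UNIV - {i}. a i j * f i j - (1 / ?N\<^sup>2) * (a i j * (norm (S $ j - S $ i))\<^sup>2))"
    by (intro sum.cong refl) (simp add: variance_state_jump_map_diff f_def algebra_simps)
  also have "\<dots> = (\<Sum>i\<in>UNIV. \<Sum>j\<in>UNIV - {i}. a i j * f i j)
      - (1 / ?N\<^sup>2) * (\<Sum>i\<in>UNIV. \<Sum>j\<in>UNIV - {i}. a i j * (norm (S $ j - S $ i))\<^sup>2)"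
    by (simp only: sum_subtractf sum_distrib_left)
  finally show ?thesis
    by (simp add: cancel)
qed

lemma consensus_law_sets:
  "consensus_law a \<mu> \<Longrightarrow> t \<ge> 0 \<Longrightarrow> sets (\<mu> t) = sets borel"
  unfolding consensus_law_def by blast

lemma consensus_law_has_real_derivative:
  assumes "consensus_law a \<mu>"
    and "\<And>s. s \<ge> 0 \<Longrightarrow> integrable (\<mu> s) \<phi>"
    and "\<And>s i j. s \<ge> 0 \<Longrightarrow> integrable (\<mu> s) (\<lambda>S. \<phi> (jump_map i j S))"
    and "t \<ge> 0"
  shows "((\<lambda>s. \<integral>S. \<phi> S \<partial>\<mu> s) has_real_derivative
           (\<Sum>i\<in>UNIV. \<Sum>j\<in>UNIV - {i}. a i j * (\<integral>S. \<phi> (jump_map i j S) - \<phi> S \<partial>\<mu> t)))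
           (at t within {0..})"
  using assms unfolding consensus_law_def by blast

lemma integrable_variance_state_jump_map:
  assumes "sets M = sets borel" and "integrable M variance_state"
  shows "integrable M (\<lambda>S. variance_state (jump_map i j S))"
proof (rule Bochner_Integration.integrable_bound)
  show "integrable M (\<lambda>S. 2 * variance_state S)"
    using assms(2) by simp
  have "(\<lambda>S. variance_state (jump_map i j S)) \<in> borel_measurable borel"
    by (intro borel_measurable_continuous_onI continuous_on_compose2[OF
          continuous_on_variance_state continuous_on_jump_map]) simp
  then show "(\<lambda>S. variance_state (jump_map i j S)) \<in> borel_measurable M"
    using measurable_cong_sets[OF assms(1) refl] by blast
  show "AE S in M. norm (variance_state (jump_map i j S)) \<le> norm (2 * variance_state S)"
  proof (rule AE_I2)
    show "norm (variance_state (jump_map i j S)) \<le> norm (2 * variance_state S)" for S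
      using variance_state_jump_map_le[of i j S] variance_state_nonneg[of "jump_map i j S"]
        variance_state_nonneg[of S] by simp
  qed
qed

lemma sum_off_diagonal_integral:
  fixes a :: "'n::finite \<Rightarrow> 'n \<Rightarrow> real"
  assumes "\<And>i j. integrable M (f i j)"
  shows "(\<Sum>i\<in>UNIV. \<Sum>j\<in>UNIV - {i}. a i j * (\<integral>x. f i j x \<partial>M))
           = (\<integral>x. (\<Sum>i\<in>UNIV. \<Sum>j\<in>UNIV - {i}. a i j * f i j x) \<partial>M)"
  using assms by (simp add: Bochner_Integration.integral_sum Bochner_Integration.integrable_sum)

theorem mainTheorem11:
  fixes a :: "'n::finite \<Rightarrow> 'n \<Rightarrow> real"
    and \<mu> :: "real \<Rightarrow> ('a::euclidean_space ^ 'n) measure"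
  assumes nonneg: "\<And>i j. i \<noteq> j \<Longrightarrow> a i j \<ge> 0"
    and symm: "\<And>i j. i \<noteq> j \<Longrightarrow> a i j = a j i"
    and law: "consensus_law a \<mu>"
    and finite_var: "\<And>t. t \<ge> 0 \<Longrightarrow> integrable (\<mu> t) variance_state"
  shows "\<forall>t\<ge>0. ((\<lambda>s. \<integral>S. variance_state S \<partial>\<mu> s) has_real_derivative
           - (1 / (real CARD('n))\<^sup>2) *
             (\<integral>S. (\<Sum>i\<in>UNIV. \<Sum>j\<in>UNIV - {i}. a i j * (norm (S $ j - S $ i))\<^sup>2) \<partial>\<mu> t))
         (at t within {0..})"
proof (intro allI impI)
  fix t :: real
  assume t: "t \<ge> 0"
  have jump_int: "integrable (\<mu> s) (\<lambda>S. variance_state (jump_map i j S))" if "s \<ge> 0" for s i j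
    using integrable_variance_state_jump_map consensus_law_sets[OF law] finite_var that by blast
  have "(\<Sum>i\<in>UNIV. \<Sum>j\<in>UNIV - {i}. a i j * (\<integral>S. variance_state (jump_map i j S) - variance_state S \<partial>\<mu> t))
      = (\<integral>S. (\<Sum>i\<in>UNIV. \<Sum>j\<in>UNIV - {i}. a i j * (variance_state (jump_map i j S) - variance_state S)) \<partial>\<mu> t)"
    using jump_int[OF t] finite_var[OF t] by (intro sum_off_diagonal_integral) simp
  also have "\<dots> = - (1 / (real CARD('n))\<^sup>2) *
      (\<integral>S. (\<Sum>i\<in>UNIV. \<Sum>j\<in>UNIV - {i}. a i j * (norm (S $ j - S $ i))\<^sup>2) \<partial>\<mu> t)"
    by (simp add: generator_variance_state[OF symm])
  finally show "((\<lambda>s. \<integral>S. variance_state S \<partial>\<mu> s) has_real_derivative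
           - (1 / (real CARD('n))\<^sup>2) *
             (\<integral>S. (\<Sum>i\<in>UNIV. \<Sum>j\<in>UNIV - {i}. a i j * (norm (S $ j - S $ i))\<^sup>2) \<partial>\<mu> t))
         (at t within {0..})"
    using consensus_law_has_real_derivative[OF law finite_var jump_int t] by simp
qed

end
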